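(* (a) If $S$ is an $\varepsilon$-synchronization string, then every consecutive substring of $S$ satisfies the $\varepsilon$-self-matching property. (b) If every consecutive substring of a string $S$ satisfies the $\frac{\varepsilon}{2}$-self-matching property, then $S$ is an $\varepsilon$-synchronization string.
   Context: $\mathrm{ED}$ is insertion/deletion edit distance; $S[i,j)$ is the substring at positions $i..j-1$. $S\in\Sigma^n$ is an $\varepsilon$-synchronization string if $\mathrm{ED}(S[i,j),S[j,k))>(1-\varepsilon)(k-i)$ for all $1\le i<j<k\le n+1$. A monotone matching between $S$ and $S'$ is a set of pairs $\{(a_1,b_1),\dots,(a_m,b_m)\}$ with $a_1<\dots<a_m$, $b_1<\dots<b_m$, $S[a_i]=S'[b_i]$. In a monotone matching from $S$ to itself a pair is good if $a_i=b_i$ and bad otherwise. A string $S$ satisfies the $\varepsilon$-self-matching property if every monotone matching between $S$ and itself contains fewer than $\varepsilon|S|$ bad pairs. *)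

theory Defs
  imports Complex_Main
begin

text \<open>Strings are lists; positions are 0-indexed, so the paper's S[i,j) with
  1 \<le> i \<le> j \<le> n+1 becomes substr S (i-1) (j-1).\<close>

definition substr :: "'a list \<Rightarrow> nat \<Rightarrow> nat \<Rightarrow> 'a list" where
  "substr S i j = take (j - i) (drop i S)"

definition indel_step :: "'a list \<Rightarrow> 'a list \<Rightarrow> bool" where
  "indel_step x y \<longleftrightarrow>
     (\<exists>u v c. x = u @ v \<and> y = u @ c # v) \<or> (\<exists>u v c. x = u @ c # v \<and> y = u @ v)"

definition ED :: "'a list \<Rightarrow> 'a list \<Rightarrow> nat" where
  "ED x y = (LEAST n. (indel_step ^^ n) x y)"

definition sync_string :: "real \<Rightarrow> 'a list \<Rightarrow> bool" where
  "sync_string \<epsilon> S \<longleftrightarrow>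
     (\<forall>i j k. i < j \<and> j < k \<and> k \<le> length S \<longrightarrow>
        real (ED (substr S i j) (substr S j k)) > (1 - \<epsilon>) * real (k - i))"

definition monotone_matching :: "'a list \<Rightarrow> 'a list \<Rightarrow> (nat \<times> nat) set \<Rightarrow> bool" where
  "monotone_matching S S' M \<longleftrightarrow>
     (\<forall>(a, b) \<in> M. a < length S \<and> b < length S' \<and> S ! a = S' ! b) \<and>
     (\<forall>(a, b) \<in> M. \<forall>(a', b') \<in> M. (a < a' \<longrightarrow> b < b') \<and> (a = a' \<longrightarrow> b = b'))"

definition bad_pairs :: "(nat \<times> nat) set \<Rightarrow> (nat \<times> nat) set" where
  "bad_pairs M = {p \<in> M. fst p \<noteq> snd p}"

definition self_matching_property :: "real \<Rightarrow> 'a list \<Rightarrow> bool" where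
  "self_matching_property \<epsilon> S \<longleftrightarrow>
     (\<forall>M. monotone_matching S S M \<longrightarrow> real (card (bad_pairs M)) < \<epsilon> * real (length S))"

end

theory Submission
  imports Defs "HOL-Library.Sublist"
begin

(*
  Insertion/deletion edit distance satisfies ED x y = |x| + |y| - 2 LCS(x, y), and common
  subsequences of x and y are the same thing as monotone matchings between x and y.

  (b) A longest common subsequence of S[i,j) and S[j,k) is a matching of S[i,k) with itself
  made of bad pairs only, so it has fewer than (eps/2)(k - i) pairs, whence
  ED(S[i,j), S[j,k)) > (1 - eps)(k - i).

  (a) Split the bad pairs (a, b) of a self-matching of a substring T of S into those with
  a < b and the swapped ones with a > b. The pairs with a < b are cut greedily into blocks:
  a block consists of the pairs starting before the smallest right endpoint j, so it matches
  T[s,j) into T[j,l], and the synchronization property bounds twice its size by eps times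
  the length of T[s,l]. Consecutive blocks overlap, but no position lies in three of them,
  so there are fewer forward pairs than eps times the number of positions covered by their
  intervals [a,b]. Forward and backward intervals are disjoint, which gives eps |T| in total.
*)

lemma substr_length: "j \<le> length S \<Longrightarrow> length (substr S i j) = j - i"
  unfolding substr_def by simp

lemma substr_substr:
  assumes "p \<le> q" "q \<le> j - i"
  shows "substr (substr S i j) p q = substr S (i + p) (i + q)"
  using assms unfolding substr_def by (simp add: drop_take min_def add.commute)

lemma substr_append:
  assumes "i \<le> j" "j \<le> k"
  shows "substr S i k = substr S i j @ substr S j k"
proof -
  have "k - i = (j - i) + (k - j)" "drop (j - i) (drop i S) = drop j S" using assms by simp_all
  then show ?thesis unfolding substr_def by (metis take_add)
qed

lemma indel_step_sym: "indel_step x y \<Longrightarrow> indel_step y x"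
  unfolding indel_step_def by blast

lemma indel_steps_sym: "(indel_step ^^ n) x y \<Longrightarrow> (indel_step ^^ n) y x"
proof (induction n arbitrary: y)
  case (Suc n)
  then obtain w where "(indel_step ^^ n) x w" "indel_step w y" by (blast elim: relpowp_Suc_E)
  with Suc.IH show ?case by (metis indel_step_sym relpowp_Suc_I2)
qed simp

lemma indel_steps_Cons: "(indel_step ^^ n) x y \<Longrightarrow> (indel_step ^^ n) (c # x) (c # y)"
proof (induction n arbitrary: y)
  case (Suc n)
  then obtain w where "(indel_step ^^ n) x w" "indel_step w y" by (blast elim: relpowp_Suc_E)
  moreover from \<open>indel_step w y\<close> have "indel_step (c # w) (c # y)"
    unfolding indel_step_def by (metis append_Cons)
  ultimately show ?case using Suc.IH by (metis relpowp_Suc_I)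
qed simp

lemma indel_step_Cons_delete: "indel_step (c # x) x"
  unfolding indel_step_def by (metis append_Nil)

lemma subseq_imp_indel_steps: "subseq z x \<Longrightarrow> (indel_step ^^ (length x - length z)) x z"
proof (induction z x rule: list_emb.induct)
  case (list_emb_Nil x)
  show ?case
  proof (induction x)
    case (Cons c x)
    then show ?case using relpowp_Suc_I2[of indel_step, OF indel_step_Cons_delete] by simp
  qed simp
next
  case (list_emb_Cons z x c)
  then have "length (c # x) - length z = Suc (length x - length z)"
    using list_emb_length by fastforce
  with list_emb_Cons.IH show ?case by (metis indel_step_Cons_delete relpowp_Suc_I2)
qed (auto intro: indel_steps_Cons)

lemma ED_le_common_subseq:
  assumes "subseq z x" "subseq z y"
  shows "ED x y \<le> length x + length y - 2 * length z"
proof -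
  have "(indel_step ^^ ((length x - length z) + (length y - length z))) x y"
    using assms by (blast intro: relpowp_trans subseq_imp_indel_steps indel_steps_sym)
  then have "ED x y \<le> (length x - length z) + (length y - length z)"
    unfolding ED_def by (rule Least_le)
  moreover have "length z \<le> length x" "length z \<le> length y"
    using assms by (blast dest: list_emb_length)+
  ultimately show ?thesis by linarith
qed

lemma indel_steps_ED: "(indel_step ^^ ED x y) x y"
proof -
  have "(indel_step ^^ (length x + length y)) x y"
    using subseq_imp_indel_steps[of "[]"] indel_steps_sym relpowp_trans by fastforce
  then show ?thesis unfolding ED_def by (rule LeastI)
qed

lemma subseq_delete:
  assumes "subseq z (u @ c # v)"
  obtains z' where "subseq z' z" "subseq z' (u @ v)" "length z \<le> Suc (length z')"
proof -
  from assms obtain z1 z2 where z: "z = z1 @ z2" "subseq z1 u" "subseq z2 (c # v)"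
    by (rule subseq_appendE)
  have "subseq (tl z2) v" using z(3) by (cases z2) (auto split: if_splits dest: subseq_Cons')
  moreover have "subseq (tl z2) z2" by (cases z2) auto
  ultimately show thesis
    using z by (intro that[of "z1 @ tl z2"]) (auto intro: list_emb_append_mono)
qed

lemma subseq_insert: "subseq (u @ v) (u @ c # v)"
  by (induction u) auto

text \<open>Each indel step shrinks a common subsequence by at most one symbol.\<close>

lemma indel_steps_common_subseq:
  "(indel_step ^^ n) x y \<Longrightarrow>
    \<exists>z. subseq z x \<and> subseq z y \<and> length x + length y \<le> 2 * length z + n"
proof (induction n arbitrary: y)
  case 0
  then show ?case by auto
next
  case (Suc n)
  then obtain w where w: "(indel_step ^^ n) x w" "indel_step w y" by (blast elim: relpowp_Suc_E)
  from Suc.IH[OF w(1)] obtain z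
    where z: "subseq z x" "subseq z w" "length x + length w \<le> 2 * length z + n" by blast
  from w(2) consider (ins) u v c where "w = u @ v" "y = u @ c # v"
    | (del) u v c where "w = u @ c # v" "y = u @ v"
    unfolding indel_step_def by blast
  then show ?case
  proof cases
    case ins
    then have "subseq z y" using z(2) subseq_insert subseq_order.order_trans by metis
    with ins z show ?thesis by auto
  next
    case del
    with z(2) obtain z' where "subseq z' z" "subseq z' y" "length z \<le> Suc (length z')"
      by (auto elim: subseq_delete)
    with del z show ?thesis by (intro exI[of _ z']) (auto intro: subseq_order.order_trans)
  qed
qed

lemma ED_ge_common_subseq:
  obtains z where "subseq z x" "subseq z y" "length x + length y \<le> 2 * length z + ED x y"
  using indel_steps_common_subseq[OF indel_steps_ED] by blast

lemma monotone_matching_iff: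
  "monotone_matching S S' M \<longleftrightarrow>
     (\<forall>(a, b) \<in> M. a < length S \<and> b < length S' \<and> S ! a = S' ! b) \<and>
     (\<forall>(a, b) \<in> M. \<forall>(a', b') \<in> M. a < a' \<longleftrightarrow> b < b')"
proof -
  have "(\<forall>(a, b) \<in> M. \<forall>(a', b') \<in> M. (a < a' \<longrightarrow> b < b') \<and> (a = a' \<longrightarrow> b = b')) \<longleftrightarrow>
        (\<forall>(a, b) \<in> M. \<forall>(a', b') \<in> M. a < a' \<longleftrightarrow> b < b')"
  proof (intro iffI ballI; clarify)
    fix a b a' b'
    assume "\<forall>(a, b) \<in> M. \<forall>(a', b') \<in> M. (a < a' \<longrightarrow> b < b') \<and> (a = a' \<longrightarrow> b = b')"
      and "(a, b) \<in> M" "(a', b') \<in> M"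
    then have "a < a' \<longrightarrow> b < b'" "a' < a \<longrightarrow> b' < b" "a = a' \<longrightarrow> b = b'" by fast+
    then show "a < a' \<longleftrightarrow> b < b'" by (metis less_asym linorder_neqE_nat)
  next
    fix a b a' b'
    assume "\<forall>(a, b) \<in> M. \<forall>(a', b') \<in> M. a < a' \<longleftrightarrow> b < b'"
      and "(a, b) \<in> M" "(a', b') \<in> M"
    then have "a < a' \<longleftrightarrow> b < b'" "a' < a \<longleftrightarrow> b' < b" by fast+
    then show "(a < a' \<longrightarrow> b < b') \<and> (a = a' \<longrightarrow> b = b')" by auto
  qed
  then show ?thesis unfolding monotone_matching_def by simp
qed

lemma monotone_matchingI:
  assumes "\<And>a b. (a, b) \<in> M \<Longrightarrow> a < length S \<and> b < length S' \<and> S ! a = S' ! b"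
    and "\<And>a b a' b'. (a, b) \<in> M \<Longrightarrow> (a', b') \<in> M \<Longrightarrow> a < a' \<longleftrightarrow> b < b'"
  shows "monotone_matching S S' M"
  unfolding monotone_matching_iff using assms by blast

lemma monotone_matchingD:
  "monotone_matching S S' M \<Longrightarrow> (a, b) \<in> M \<Longrightarrow> a < length S \<and> b < length S' \<and> S ! a = S' ! b"
  unfolding monotone_matching_def by blast

lemma monotone_matching_less_iff:
  "monotone_matching S S' M \<Longrightarrow> (a, b) \<in> M \<Longrightarrow> (a', b') \<in> M \<Longrightarrow> a < a' \<longleftrightarrow> b < b'"
  unfolding monotone_matching_iff by blast

lemma monotone_matching_subset:
  "monotone_matching S S' M \<Longrightarrow> M' \<subseteq> M \<Longrightarrow> monotone_matching S S' M'"
  unfolding monotone_matching_def by blast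

lemma monotone_matching_swap:
  assumes "monotone_matching S S' M"
  shows "monotone_matching S' S (prod.swap ` M)"
  using monotone_matchingD[OF assms] monotone_matching_less_iff[OF assms]
  by (intro monotone_matchingI) auto

lemma monotone_matching_finite: "monotone_matching S S' M \<Longrightarrow> finite M"
  by (rule finite_subset[of _ "{..<length S} \<times> {..<length S'}"]) (auto dest: monotone_matchingD)

lemma monotone_matching_take:
  assumes "monotone_matching S S' M" "\<And>a b. (a, b) \<in> M \<Longrightarrow> a < i \<and> b < j"
  shows "monotone_matching (take i S) (take j S') M"
  using assms monotone_matchingD[OF assms(1)] monotone_matching_less_iff[OF assms(1)]
  by (intro monotone_matchingI) auto

lemma subseq_snoc_take: "subseq z (take a x) \<Longrightarrow> a < length x \<Longrightarrow> subseq (z @ [x ! a]) x"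
  by (metis list_emb_append_mono prefix_imp_subseq subseq_order.dual_order.trans
      subseq_order.order_refl take_Suc_conv_app_nth take_is_prefix)

lemma monotone_matching_common_subseq:
  "monotone_matching x y M \<Longrightarrow> \<exists>z. subseq z x \<and> subseq z y \<and> length z = card M"
proof (induction "card M" arbitrary: M x y rule: less_induct)
  case less
  show ?case
  proof (cases "M = {}")
    case True
    then show ?thesis by auto
  next
    case False
    have fin: "finite M" using less.prems by (rule monotone_matching_finite)
    define a where "a = Max (fst ` M)"
    have "a \<in> fst ` M" unfolding a_def using False fin by simp
    then obtain b where ab: "(a, b) \<in> M" by force
    define M' where "M' = M - {(a, b)}"
    have below: "a' < a \<and> b' < b" if "(a', b') \<in> M'" for a' b'
    proof -
      have M: "(a', b') \<in> M" "(a', b') \<noteq> (a, b)" using that unfolding M'_def by auto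
      have "a' \<le> a" unfolding a_def using fin M(1) by (simp add: rev_image_eqI)
      moreover have "a' \<noteq> a"
        using monotone_matching_less_iff[OF less.prems M(1) ab]
          monotone_matching_less_iff[OF less.prems ab M(1)] M(2) by auto
      ultimately have "a' < a" by simp
      then show ?thesis using monotone_matching_less_iff[OF less.prems M(1) ab] by simp
    qed
    have xy: "a < length x" "b < length y" "x ! a = y ! b"
      using monotone_matchingD[OF less.prems ab] by auto
    have "monotone_matching (take a x) (take b y) M'"
      using monotone_matching_subset[OF less.prems, of M'] below
      by (intro monotone_matching_take) (auto simp: M'_def)
    moreover have cardM: "card M = Suc (card M')"
      unfolding M'_def using fin ab by (rule card.remove)
    ultimately obtain z where z: "subseq z (take a x)" "subseq z (take b y)" "length z = card M'"
      using less.hyps[of M' "take a x" "take b y"] by auto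
    have "subseq (z @ [x ! a]) x" "subseq (z @ [x ! a]) y"
      using subseq_snoc_take[OF z(1) xy(1)] subseq_snoc_take[OF z(2) xy(2)] xy(3) by simp_all
    with z(3) cardM show ?thesis by (intro exI[of _ "z @ [x ! a]"]) simp
  qed
qed

lemma subseq_index_map:
  "subseq z x \<Longrightarrow>
    \<exists>f. strict_mono_on {..<length z} f \<and> (\<forall>i < length z. f i < length x \<and> x ! f i = z ! i)"
proof (induction z x rule: list_emb.induct)
  case (list_emb_Cons z x c)
  then obtain f where "strict_mono_on {..<length z} f" "\<forall>i < length z. f i < length x \<and> x ! f i = z ! i"
    by blast
  then show ?case by (intro exI[of _ "Suc \<circ> f"]) (auto simp: strict_mono_on_def)
next
  case (list_emb_Cons2 c d z x)
  then obtain f where f: "strict_mono_on {..<length z} f" "\<forall>i < length z. f i < length x \<and> x ! f i = z ! i"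
    by blast
  define g where "g i = (case i of 0 \<Rightarrow> 0 | Suc i' \<Rightarrow> Suc (f i'))" for i
  have "strict_mono_on {..<length (c # z)} g"
    using f(1) by (auto simp: strict_mono_on_def g_def split: nat.split)
  moreover have "\<forall>i < length (c # z). g i < length (d # x) \<and> (d # x) ! g i = (c # z) ! i"
    using f(2) list_emb_Cons2.hyps(1) by (auto simp: g_def nth_Cons split: nat.split)
  ultimately show ?case by blast
qed (auto simp: strict_mono_on_def)

lemma common_subseq_monotone_matching:
  assumes "subseq z x" "subseq z y"
  obtains M where "monotone_matching x y M" "card M = length z"
proof -
  obtain f where f: "strict_mono_on {..<length z} f" "\<forall>i < length z. f i < length x \<and> x ! f i = z ! i"
    using subseq_index_map[OF assms(1)] by blast
  obtain g where g: "strict_mono_on {..<length z} g" "\<forall>i < length z. g i < length y \<and> y ! g i = z ! i"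
    using subseq_index_map[OF assms(2)] by blast
  define M where "M = (\<lambda>i. (f i, g i)) ` {..<length z}"
  have "f i < f j \<longleftrightarrow> g i < g j" if "i < length z" "j < length z" for i j
    using strict_mono_on_less[OF f(1)] strict_mono_on_less[OF g(1)] that by simp
  with f(2) g(2) have "monotone_matching x y M"
    by (intro monotone_matchingI) (auto simp: M_def)
  moreover have "card M = length z"
    unfolding M_def using strict_mono_on_imp_inj_on[OF f(1)]
    by (subst card_image) (auto simp: inj_on_def)
  ultimately show thesis by (rule that)
qed

lemma monotone_matching_substr:
  assumes "monotone_matching T T' G" "q \<le> length T" "r \<le> length T'"
    and "\<And>a b. (a, b) \<in> G \<Longrightarrow> p \<le> a \<and> a < q \<and> p' \<le> b \<and> b < r"
  shows "monotone_matching (substr T p q) (substr T' p' r) (map_prod (\<lambda>a. a - p) (\<lambda>b. b - p') ` G)"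
proof (rule monotone_matchingI; clarsimp)
  fix a b assume "(a, b) \<in> G"
  with assms(4) have "p \<le> a" "a < q" "p' \<le> b" "b < r" by auto
  with assms(2,3) monotone_matchingD[OF assms(1) \<open>(a, b) \<in> G\<close>] show
    "a - p < length (substr T p q) \<and> b - p' < length (substr T' p' r) \<and>
     substr T p q ! (a - p) = substr T' p' r ! (b - p')"
    by (simp add: substr_def diff_less_mono)
next
  fix a b a' b' assume "(a, b) \<in> G" "(a', b') \<in> G"
  moreover from this have "p \<le> a" "p \<le> a'" "p' \<le> b" "p' \<le> b'" using assms(4) by auto
  ultimately show "a - p < a' - p \<longleftrightarrow> b - p' < b' - p'"
    using monotone_matching_less_iff[OF assms(1)] by (simp add: less_diff_iff)
qed

lemma monotone_matching_append_self:
  assumes "monotone_matching x y M"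
  shows "monotone_matching (x @ y) (x @ y) (map_prod id ((+) (length x)) ` M)"
  using monotone_matchingD[OF assms] monotone_matching_less_iff[OF assms]
  by (intro monotone_matchingI) (auto simp: nth_append)

definition matching_span :: "(nat \<times> nat) set \<Rightarrow> nat set" where
  "matching_span M = (\<Union>(a, b) \<in> M. {a..b})"

lemma matching_span_subset:
  assumes "monotone_matching S S' M" "\<And>a b. (a, b) \<in> M \<Longrightarrow> a \<le> b"
  shows "matching_span M \<subseteq> {..<length S'}"
  using assms monotone_matchingD[OF assms(1)] unfolding matching_span_def by fastforce

text \<open>A synchronization string cannot match many symbols of \<open>T[p,q)\<close> against \<open>T[q,r)\<close>:
  a matching of size \<open>m\<close> is a common subsequence, so the two halves are within edit
  distance \<open>(r - p) - 2m\<close>.\<close>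

lemma crossing_matching_bound:
  assumes sync: "sync_string \<epsilon> T" and G: "monotone_matching T T G"
    and pqr: "p < q" "q < r" "r \<le> length T"
    and between: "\<And>a b. (a, b) \<in> G \<Longrightarrow> p \<le> a \<and> a < q \<and> q \<le> b \<and> b < r"
  shows "2 * real (card G) < \<epsilon> * real (r - p)"
proof -
  let ?x = "substr T p q" and ?y = "substr T q r"
  let ?G = "map_prod (\<lambda>a. a - p) (\<lambda>b. b - q) ` G"
  have "monotone_matching ?x ?y ?G"
    using G pqr between by (intro monotone_matching_substr) auto
  moreover have "card ?G = card G"
  proof (rule card_image, rule inj_onI)
    fix u v assume "u \<in> G" "v \<in> G"
      and "map_prod (\<lambda>a. a - p) (\<lambda>b. b - q) u = map_prod (\<lambda>a. a - p) (\<lambda>b. b - q) v"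
    then show "u = v"
      using between[of "fst u" "snd u"] between[of "fst v" "snd v"] by (cases u, cases v) auto
  qed
  ultimately obtain z where z: "subseq z ?x" "subseq z ?y" "length z = card G"
    using monotone_matching_common_subseq by metis
  have lengths: "length ?x + length ?y = r - p" using pqr by (simp add: substr_length)
  have "ED ?x ?y \<le> length ?x + length ?y - 2 * length z"
    using z(1,2) by (rule ED_le_common_subseq)
  moreover have "length z \<le> length ?x" "length z \<le> length ?y"
    using z(1,2) by (blast dest: list_emb_length)+
  ultimately have "real (ED ?x ?y) \<le> real (r - p) - 2 * real (card G)"
    using lengths z(3) by linarith
  moreover have "(1 - \<epsilon>) * real (r - p) < real (ED ?x ?y)"
    using sync pqr unfolding sync_string_def by blast
  ultimately show ?thesis by (simp add: algebra_simps del: of_nat_diff)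
qed

lemma card_interval_union_le:
  fixes A A' :: "nat set"
  assumes "finite A" "{s..l} \<subseteq> A" "A' \<subseteq> A \<inter> {j..}" "c \<le> j"
  shows "card {s..l} + card A' + card (A' \<inter> {Suc l..}) \<le> card A + card (A \<inter> {c..})"
proof -
  have "card {s..l} + card (A' \<inter> {Suc l..}) = card ({s..l} \<union> (A' \<inter> {Suc l..}))"
    using assms by (intro card_Un_disjoint[symmetric]) (auto intro: finite_subset)
  also have "\<dots> \<le> card A" using assms by (intro card_mono) auto
  finally have "card {s..l} + card (A' \<inter> {Suc l..}) \<le> card A" .
  moreover have "card A' \<le> card (A \<inter> {c..})" using assms by (intro card_mono) auto
  ultimately show ?thesis by linarith
qed

text \<open>The summand \<open>matching_span F \<inter> {c..}\<close> pays for the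
  overlap of consecutive blocks: all later pairs end beyond the first block, so no position
  is covered by three blocks.\<close>

lemma forward_matching_bound:
  assumes sync: "sync_string \<epsilon> T" and "0 \<le> \<epsilon>"
  shows "monotone_matching T T F \<Longrightarrow> F \<noteq> {} \<Longrightarrow> (\<And>a b. (a, b) \<in> F \<Longrightarrow> a < b \<and> c \<le> b) \<Longrightarrow>
    2 * real (card F) < \<epsilon> * real (card (matching_span F) + card (matching_span F \<inter> {c..}))"
proof (induction "card F" arbitrary: F c rule: less_induct)
  case less
  note F = less.prems(1) and forward = less.prems(3)
  have fin: "finite F" using F by (rule monotone_matching_finite)
  define s where "s = Min (fst ` F)"
  have "s \<in> fst ` F" unfolding s_def using fin less.prems(2) by simp
  then obtain j where sj: "(s, j) \<in> F" by force
  have s_le: "s \<le> a" if "(a, b) \<in> F" for a b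
    unfolding s_def using fin that by (simp add: rev_image_eqI)
  have j_le: "j \<le> b" if "(a, b) \<in> F" for a b
    using monotone_matching_less_iff[OF F that sj] s_le[OF that] by (meson not_le order.strict_trans2)
  define G where "G = {(a, b) \<in> F. a < j}"
  define F' where "F' = {(a, b) \<in> F. j \<le> a}"
  have "G \<subseteq> F" "F' \<subseteq> F" unfolding G_def F'_def by auto
  have "(s, j) \<in> G" unfolding G_def using sj forward by blast
  then have fin_G: "finite G" and "G \<noteq> {}" using finite_subset[OF \<open>G \<subseteq> F\<close> fin] by auto
  define l where "l = Max (snd ` G)"
  have "l \<in> snd ` G" unfolding l_def using fin_G \<open>G \<noteq> {}\<close> by simp
  then obtain a\<^sub>l where al: "(a\<^sub>l, l) \<in> G" by force
  have le_l: "b \<le> l" if "(a, b) \<in> G" for a b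
    unfolding l_def using fin_G that by (simp add: rev_image_eqI)
  have "l < length T" using monotone_matchingD[OF F] al \<open>G \<subseteq> F\<close> by blast
  have block: "2 * real (card G) < \<epsilon> * real (Suc l - s)"
  proof (rule crossing_matching_bound[OF sync monotone_matching_subset[OF F \<open>G \<subseteq> F\<close>]])
    show "s < j" "j < Suc l" "Suc l \<le> length T"
      using forward[OF sj] le_l[OF \<open>(s, j) \<in> G\<close>] \<open>l < length T\<close> by auto
    show "s \<le> a \<and> a < j \<and> j \<le> b \<and> b < Suc l" if "(a, b) \<in> G" for a b
      using that s_le j_le le_l \<open>G \<subseteq> F\<close> unfolding G_def by fastforce
  qed
  have beyond: "j \<le> a \<and> l < b" if "(a, b) \<in> F'" for a b
  proof -
    have "a\<^sub>l < a" using that al unfolding F'_def G_def by auto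
    then show ?thesis
      using that al monotone_matching_less_iff[OF F] \<open>G \<subseteq> F\<close> \<open>F' \<subseteq> F\<close> unfolding F'_def by blast
  qed
  have rest: "2 * real (card F') \<le>
      \<epsilon> * real (card (matching_span F') + card (matching_span F' \<inter> {Suc l..}))"
  proof (cases "F' = {}")
    case True
    then show ?thesis by (simp add: matching_span_def)
  next
    case False
    have "(s, j) \<notin> F'" unfolding F'_def using forward[OF sj] by auto
    then have "card F' < card F"
      using fin sj \<open>F' \<subseteq> F\<close> by (intro psubset_card_mono) auto
    then show ?thesis
      using less.hyps[of F' "Suc l"] monotone_matching_subset[OF F \<open>F' \<subseteq> F\<close>] False
        forward beyond \<open>F' \<subseteq> F\<close> by fastforce
  qed
  have "F = G \<union> F'" "G \<inter> F' = {}" unfolding G_def F'_def by auto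
  then have card_F: "card F = card G + card F'"
    using card_Un_disjoint[OF fin_G finite_subset[OF \<open>F' \<subseteq> F\<close> fin]] by simp
  have spans: "card {s..l} + card (matching_span F') + card (matching_span F' \<inter> {Suc l..})
      \<le> card (matching_span F) + card (matching_span F \<inter> {c..})"
  proof (rule card_interval_union_le)
    show "finite (matching_span F)"
    proof (rule finite_subset[OF matching_span_subset[OF F]])
      show "a \<le> b" if "(a, b) \<in> F" for a b using forward[OF that] by simp
    qed simp
    show "{s..l} \<subseteq> matching_span F"
    proof
      fix x assume "x \<in> {s..l}"
      moreover have "a\<^sub>l < j" using al unfolding G_def by simp
      ultimately have "x \<in> {s..j} \<or> x \<in> {a\<^sub>l..l}" by auto
      then show "x \<in> matching_span F"
        using sj al \<open>G \<subseteq> F\<close> unfolding matching_span_def by blast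
    qed
    show "matching_span F' \<subseteq> matching_span F \<inter> {j..}"
    proof
      fix x assume "x \<in> matching_span F'"
      then obtain a b where ab: "(a, b) \<in> F'" "x \<in> {a..b}" unfolding matching_span_def by blast
      then have "(a, b) \<in> F" "j \<le> x" using beyond[OF ab(1)] \<open>F' \<subseteq> F\<close> by auto
      with ab(2) show "x \<in> matching_span F \<inter> {j..}" unfolding matching_span_def by blast
    qed
    show "c \<le> j" using forward[OF sj] by blast
  qed
  have "2 * real (card F) < \<epsilon> * real (card {s..l})
      + \<epsilon> * real (card (matching_span F') + card (matching_span F' \<inter> {Suc l..}))"
    using block rest card_F by (simp del: of_nat_diff)
  also have "\<dots> = \<epsilon> * real (card {s..l} + card (matching_span F') + card (matching_span F' \<inter> {Suc l..}))"
    by (simp add: algebra_simps)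
  also have "\<dots> \<le> \<epsilon> * real (card (matching_span F) + card (matching_span F \<inter> {c..}))"
    using spans \<open>0 \<le> \<epsilon>\<close> by (intro mult_left_mono) simp_all
  finally show ?case .
qed

lemma forward_matching_card_less:
  assumes "sync_string \<epsilon> T" "0 \<le> \<epsilon>" "monotone_matching T T F" "F \<noteq> {}"
    and "\<And>a b. (a, b) \<in> F \<Longrightarrow> a < b"
  shows "real (card F) < \<epsilon> * real (card (matching_span F))"
  using forward_matching_bound[OF assms(1,2,3,4), of 0] assms(5) by simp

lemma monotone_matching_forward_backward_disjoint:
  assumes M: "monotone_matching S S' M" and "(a, b) \<in> M" "(b', a') \<in> M" "a < b" "a' < b'"
  shows "{a..b} \<inter> {a'..b'} = {}"
  using monotone_matching_less_iff[OF M \<open>(a, b) \<in> M\<close> \<open>(b', a') \<in> M\<close>]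
    monotone_matching_less_iff[OF M \<open>(b', a') \<in> M\<close> \<open>(a, b) \<in> M\<close>] assms(4,5)
  by (cases a b' rule: linorder_cases) auto

lemma card_bad_pairs_split:
  assumes "monotone_matching S S' M"
  shows "card (bad_pairs M) = card {(a, b) \<in> M. a < b} + card (prod.swap ` {(a, b) \<in> M. b < a})"
proof -
  have fin: "finite M" using assms by (rule monotone_matching_finite)
  have "bad_pairs M = {(a, b) \<in> M. a < b} \<union> {(a, b) \<in> M. b < a}"
    "{(a, b) \<in> M. a < b} \<inter> {(a, b) \<in> M. b < a} = {}"
    unfolding bad_pairs_def by auto
  moreover have "finite {(a, b) \<in> M. a < b}" "finite {(a, b) \<in> M. b < a}"
    by (rule finite_subset[OF _ fin], blast)+
  ultimately show ?thesis by (simp add: card_Un_disjoint card_image swap_inj_on)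
qed

lemma card_matching_spans_le:
  assumes "monotone_matching T T F" "monotone_matching T T B"
    and "\<And>a b. (a, b) \<in> F \<Longrightarrow> a < b" "\<And>a b. (a, b) \<in> B \<Longrightarrow> a < b"
    and "matching_span F \<inter> matching_span B = {}"
  shows "card (matching_span F) + card (matching_span B) \<le> length T"
proof -
  have "matching_span F \<subseteq> {..<length T}" "matching_span B \<subseteq> {..<length T}"
    using assms(1-4) matching_span_subset by (metis less_imp_le)+
  then show ?thesis using assms(5)
    by (metis card_Un_disjoint card_lessThan card_mono finite_lessThan finite_subset le_sup_iff)
qed

lemma sync_string_self_matching:
  assumes sync: "sync_string \<epsilon> T" and "0 < \<epsilon>" "T \<noteq> []"
  shows "self_matching_property \<epsilon> T"
  unfolding self_matching_property_def
proof (intro allI impI)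
  fix M assume M: "monotone_matching T T M"
  define Fw where "Fw = {(a, b) \<in> M. a < b}"
  define Bw where "Bw = prod.swap ` {(a, b) \<in> M. b < a}"
  have Fw: "monotone_matching T T Fw" unfolding Fw_def by (rule monotone_matching_subset[OF M]) auto
  have Bw: "monotone_matching T T Bw"
    unfolding Bw_def by (rule monotone_matching_swap, rule monotone_matching_subset[OF M]) auto
  have fw: "\<And>a b. (a, b) \<in> Fw \<Longrightarrow> a < b" and bw: "\<And>a b. (a, b) \<in> Bw \<Longrightarrow> a < b"
    unfolding Fw_def Bw_def by auto
  have "matching_span Fw \<inter> matching_span Bw = {}"
    using monotone_matching_forward_backward_disjoint[OF M] unfolding matching_span_def Fw_def Bw_def
    by fastforce
  then have spans: "\<epsilon> * real (card (matching_span Fw)) + \<epsilon> * real (card (matching_span Bw))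
      \<le> \<epsilon> * real (length T)"
    using card_matching_spans_le[OF Fw Bw fw bw] \<open>0 < \<epsilon>\<close> by (simp add: distrib_left[symmetric])
  have bound: "real (card F) \<le> \<epsilon> * real (card (matching_span F))"
    if "monotone_matching T T F" "\<And>a b. (a, b) \<in> F \<Longrightarrow> a < b" for F
    using forward_matching_card_less[OF sync _ that(1) _ that(2)] \<open>0 < \<epsilon>\<close>
    by (cases "F = {}") (simp_all add: less_imp_le)
  have card_bad: "real (card (bad_pairs M)) = real (card Fw) + real (card Bw)"
    using card_bad_pairs_split[OF M] unfolding Fw_def Bw_def by simp
  consider "Fw = {}" "Bw = {}" | "Fw \<noteq> {}" | "Bw \<noteq> {}" by blast
  then show "real (card (bad_pairs M)) < \<epsilon> * real (length T)"
  proof cases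
    case 1
    then show ?thesis using card_bad assms by simp
  next
    case 2
    then show ?thesis
      using card_bad spans bound[OF Bw bw] forward_matching_card_less[OF sync _ Fw _ fw] \<open>0 < \<epsilon>\<close>
      by linarith
  next
    case 3
    then show ?thesis
      using card_bad spans bound[OF Fw fw] forward_matching_card_less[OF sync _ Bw _ bw] \<open>0 < \<epsilon>\<close>
      by linarith
  qed
qed

lemma self_matching_sync_gap:
  assumes ijk: "i < j" "j < k" "k \<le> length S"
    and self_matching: "self_matching_property (\<epsilon> / 2) (substr S i k)"
  shows "(1 - \<epsilon>) * real (k - i) < real (ED (substr S i j) (substr S j k))"
proof -
  let ?x = "substr S i j" and ?y = "substr S j k"
  obtain z where z: "subseq z ?x" "subseq z ?y" "length ?x + length ?y \<le> 2 * length z + ED ?x ?y"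
    by (rule ED_ge_common_subseq)
  obtain M where M: "monotone_matching ?x ?y M" "card M = length z"
    using z(1,2) by (rule common_subseq_monotone_matching)
  let ?M = "map_prod id ((+) (length ?x)) ` M"
  have split: "substr S i k = ?x @ ?y" using ijk by (simp add: substr_append)
  have "monotone_matching (substr S i k) (substr S i k) ?M"
    unfolding split using M(1) by (rule monotone_matching_append_self)
  moreover have "bad_pairs ?M = ?M"
    using monotone_matchingD[OF M(1)] unfolding bad_pairs_def by fastforce
  moreover have "card ?M = length z"
    using M(2) by (subst card_image) (auto simp: inj_on_def)
  ultimately have "real (length z) < \<epsilon> / 2 * real (length (substr S i k))"
    using self_matching unfolding self_matching_property_def by metis
  moreover have "length ?x + length ?y = k - i" "length (substr S i k) = k - i"
    using ijk by (simp_all add: substr_length)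
  ultimately have "real (k - i) \<le> 2 * real (length z) + real (ED ?x ?y)"
    and "2 * real (length z) < \<epsilon> * real (k - i)"
    using z(3) by (simp_all only: of_nat_add of_nat_mult of_nat_le_iff)
  then show ?thesis by (simp add: left_diff_distrib del: of_nat_diff)
qed

lemma sync_string_substr:
  assumes "sync_string \<epsilon> S" "i \<le> j" "j \<le> length S"
  shows "sync_string \<epsilon> (substr S i j)"
  unfolding sync_string_def
proof (intro allI impI, elim conjE)
  fix p q r assume pqr: "p < q" "q < r" "r \<le> length (substr S i j)"
  then have "r \<le> j - i" using assms by (simp add: substr_length)
  then have "substr (substr S i j) p q = substr S (i + p) (i + q)"
    "substr (substr S i j) q r = substr S (i + q) (i + r)"
    using pqr by (simp_all add: substr_substr)
  moreover have "i + p < i + q" "i + q < i + r" "i + r \<le> length S"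
    using pqr \<open>r \<le> j - i\<close> assms(2,3) by simp_all
  then have "(1 - \<epsilon>) * real ((i + r) - (i + p))
      < real (ED (substr S (i + p) (i + q)) (substr S (i + q) (i + r)))"
    using assms(1) unfolding sync_string_def by blast
  ultimately show "(1 - \<epsilon>) * real (r - p) < real (ED (substr (substr S i j) p q) (substr (substr S i j) q r))"
    by simp
qed

theorem theorem29:
  fixes \<epsilon> :: real and S :: "'a list"
  assumes "0 < \<epsilon>" and "\<epsilon> < 1"
  shows "(sync_string \<epsilon> S \<longrightarrow>
           (\<forall>i j. i < j \<and> j \<le> length S \<longrightarrow> self_matching_property \<epsilon> (substr S i j)))
       \<and> ((\<forall>i j. i < j \<and> j \<le> length S \<longrightarrow> self_matching_property (\<epsilon> / 2) (substr S i j))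
           \<longrightarrow> sync_string \<epsilon> S)"
proof (intro conjI impI allI)
  fix i j assume "sync_string \<epsilon> S" and ij: "i < j \<and> j \<le> length S"
  then have "sync_string \<epsilon> (substr S i j)" by (simp add: sync_string_substr)
  moreover have "substr S i j \<noteq> []" using ij by (simp add: substr_def)
  ultimately show "self_matching_property \<epsilon> (substr S i j)"
    by (rule sync_string_self_matching[OF _ \<open>0 < \<epsilon>\<close>])
next
  assume self_matching: "\<forall>i j. i < j \<and> j \<le> length S \<longrightarrow> self_matching_property (\<epsilon> / 2) (substr S i j)"
  show "sync_string \<epsilon> S"
    unfolding sync_string_def
  proof (intro allI impI, elim conjE)
    fix i j k assume "i < j" "j < k" "k \<le> length S"
    with self_matching show "(1 - \<epsilon>) * real (k - i) < real (ED (substr S i j) (substr S j k))"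
      by (intro self_matching_sync_gap) auto
  qed
qed

end
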